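(* Let $p$ be a prime. For $i\in\{1,2\}$ let $D_i$ be a finite group, $\psi_i:D_i\to\mathrm{GL}_{d_i}(\mathbb{F}_p)$ a representation, and $G_i=\mathbb{Z}_p^{d_i}\rtimes_{\psi_i}D_i$, where $p\nmid|D_1||D_2|$. Then the following are equivalent: (i) $G_1\cong G_2$; (ii) there exists an isomorphism $\sigma:D_1\to D_2$ such that $\psi_2\circ\sigma\cong\psi_1$ (as representations of $D_1$). Moreover, if (ii) holds, there exists an isomorphism $f:G_1\to G_2$ with $f(D_1)=D_2$ and $f|_{D_1}=\sigma$.
   Context: $\mathbb{Z}_p^{d}\rtimes_\psi D$ denotes the semidirect product in which $D$ acts on $\mathbb{Z}_p^d=\mathbb{F}_p^d$ via $\psi$; $D_i$ is identified with its canonical complement in $G_i$. *)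

theory Defs
  imports "HOL-Algebra.Algebra"
begin

text \<open>Vectors of F_p^d: functions nat => int with entries in {0..<p}, supported on {0..<d}.\<close>
definition fvecs :: "int \<Rightarrow> nat \<Rightarrow> (nat \<Rightarrow> int) set" where
  "fvecs p d = {v. (\<forall>i. 0 \<le> v i \<and> v i < p) \<and> (\<forall>i. d \<le> i \<longrightarrow> v i = 0)}"

definition fvec_zero :: "nat \<Rightarrow> int" where
  "fvec_zero = (\<lambda>i. 0)"

definition fvec_add :: "int \<Rightarrow> nat \<Rightarrow> (nat \<Rightarrow> int) \<Rightarrow> (nat \<Rightarrow> int) \<Rightarrow> (nat \<Rightarrow> int)" where
  "fvec_add p d v w = (\<lambda>i. if i < d then (v i + w i) mod p else 0)"

definition fmats :: "int \<Rightarrow> nat \<Rightarrow> (nat \<Rightarrow> nat \<Rightarrow> int) set" where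
  "fmats p d = {A. (\<forall>i j. 0 \<le> A i j \<and> A i j < p) \<and> (\<forall>i j. d \<le> i \<or> d \<le> j \<longrightarrow> A i j = 0)}"

definition fmat_mult :: "int \<Rightarrow> nat \<Rightarrow> (nat \<Rightarrow> nat \<Rightarrow> int) \<Rightarrow> (nat \<Rightarrow> nat \<Rightarrow> int) \<Rightarrow> (nat \<Rightarrow> nat \<Rightarrow> int)" where
  "fmat_mult p d A B = (\<lambda>i j. if i < d \<and> j < d then (\<Sum>k<d. A i k * B k j) mod p else 0)"

definition fmat_one :: "nat \<Rightarrow> (nat \<Rightarrow> nat \<Rightarrow> int)" where
  "fmat_one d = (\<lambda>i j. if i = j \<and> i < d then 1 else 0)"

definition fmat_act :: "int \<Rightarrow> nat \<Rightarrow> (nat \<Rightarrow> nat \<Rightarrow> int) \<Rightarrow> (nat \<Rightarrow> int) \<Rightarrow> (nat \<Rightarrow> int)" where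
  "fmat_act p d A v = (\<lambda>i. if i < d then (\<Sum>k<d. A i k * v k) mod p else 0)"

definition GL :: "int \<Rightarrow> nat \<Rightarrow> (nat \<Rightarrow> nat \<Rightarrow> int) monoid" where
  "GL p d = \<lparr> carrier = {A \<in> fmats p d. \<exists>B \<in> fmats p d.
                  fmat_mult p d A B = fmat_one d \<and> fmat_mult p d B A = fmat_one d},
             monoid.mult = fmat_mult p d, one = fmat_one d \<rparr>"

definition rep_equiv :: "('a, 'c) monoid_scheme \<Rightarrow> int \<Rightarrow> nat \<Rightarrow> nat
    \<Rightarrow> ('a \<Rightarrow> nat \<Rightarrow> nat \<Rightarrow> int) \<Rightarrow> ('a \<Rightarrow> nat \<Rightarrow> nat \<Rightarrow> int) \<Rightarrow> bool" where
  "rep_equiv D p d1 d2 rho1 rho2 \<longleftrightarrow> d1 = d2 \<and>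
     (\<exists>T \<in> carrier (GL p d1). \<forall>g \<in> carrier D.
        fmat_mult p d1 T (rho1 g) = fmat_mult p d1 (rho2 g) T)"

definition semidirect :: "int \<Rightarrow> nat \<Rightarrow> ('a, 'c) monoid_scheme \<Rightarrow> ('a \<Rightarrow> nat \<Rightarrow> nat \<Rightarrow> int)
    \<Rightarrow> ((nat \<Rightarrow> int) \<times> 'a) monoid" where
  "semidirect p d D psi = \<lparr> carrier = fvecs p d \<times> carrier D,
     monoid.mult = (\<lambda>(v, g) (w, h). (fvec_add p d v (fmat_act p d (psi g) w), g \<otimes>\<^bsub>D\<^esub> h)),
     one = (fvec_zero, \<one>\<^bsub>D\<^esub>) \<rparr>"

definition complement :: "('a, 'c) monoid_scheme \<Rightarrow> ((nat \<Rightarrow> int) \<times> 'a) set" where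
  "complement D = {fvec_zero} \<times> carrier D"

end

theory Submission
  imports Defs
begin

text \<open>Since \<open>p\<close> does not divide \<open>|D\<^sub>i|\<close>, the vector subgroup of \<open>G\<^sub>i\<close> is exactly the set
  of solutions of \<open>x\<^sup>p = 1\<close>, so every isomorphism \<open>f : G\<^sub>1 \<rightarrow> G\<^sub>2\<close> maps the vector
  subgroup of \<open>G\<^sub>1\<close> onto that of \<open>G\<^sub>2\<close>. The restriction is an additive, hence
  \<open>F\<^sub>p\<close>-linear, bijection \<open>T\<close> (so \<open>d\<^sub>1 = d\<^sub>2\<close>), and \<open>f\<close> induces an isomorphism \<open>\<sigma>\<close>
  of the quotients \<open>D\<^sub>1 \<rightarrow> D\<^sub>2\<close>. Applying \<open>f\<close> to \<open>(0, g) (v, 1) = (\<psi>\<^sub>1(g) v, 1) (0, g)\<close>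
  gives \<open>T \<psi>\<^sub>1(g) = \<psi>\<^sub>2(\<sigma> g) T\<close>. Conversely, for such \<open>\<sigma>\<close> and \<open>T\<close> the map
  \<open>(v, g) \<mapsto> (T v, \<sigma> g)\<close> is an isomorphism extending \<open>\<sigma>\<close> on the complements.\<close>

section \<open>Vectors and matrices over \<open>F\<^sub>p\<close>\<close>

lemma fvecsD:
  "v \<in> fvecs p d \<Longrightarrow> 0 \<le> v i \<and> v i < p"
  "v \<in> fvecs p d \<Longrightarrow> d \<le> i \<Longrightarrow> v i = 0"
  by (auto simp: fvecs_def)

lemma fvecs_mod: "v \<in> fvecs p d \<Longrightarrow> v i mod p = v i"
  by (auto simp: fvecs_def)

lemma fmatsD:
  "A \<in> fmats p d \<Longrightarrow> 0 \<le> A i j \<and> A i j < p"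
  "A \<in> fmats p d \<Longrightarrow> d \<le> i \<or> d \<le> j \<Longrightarrow> A i j = 0"
  by (auto simp: fmats_def)

lemma fvec_zero_closed: "0 < p \<Longrightarrow> fvec_zero \<in> fvecs p d"
  by (auto simp: fvecs_def fvec_zero_def)

lemma fvec_add_closed: "0 < p \<Longrightarrow> fvec_add p d v w \<in> fvecs p d"
  by (auto simp: fvecs_def fvec_add_def)

lemma fmat_act_closed: "0 < p \<Longrightarrow> fmat_act p d A v \<in> fvecs p d"
  by (auto simp: fvecs_def fmat_act_def)

lemma fmat_mult_closed: "0 < p \<Longrightarrow> fmat_mult p d A B \<in> fmats p d"
  by (auto simp: fmats_def fmat_mult_def)

lemma fmat_one_closed: "1 < p \<Longrightarrow> fmat_one d \<in> fmats p d"
  by (auto simp: fmats_def fmat_one_def)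

lemma fvec_add_zero_left: "v \<in> fvecs p d \<Longrightarrow> fvec_add p d fvec_zero v = v"
  and fvec_add_zero_right: "v \<in> fvecs p d \<Longrightarrow> fvec_add p d v fvec_zero = v"
  by (auto simp: fvec_add_def fvec_zero_def fvecs_mod fvecsD(2))

lemma fvec_add_commute: "fvec_add p d v w = fvec_add p d w v"
  by (auto simp: fvec_add_def add.commute)

lemma fvec_add_assoc: "fvec_add p d (fvec_add p d u v) w = fvec_add p d u (fvec_add p d v w)"
  by (auto simp: fvec_add_def mod_simps add.assoc)

lemma fvec_add_left_cancel:
  assumes "v \<in> fvecs p d" "w \<in> fvecs p d" "fvec_add p d u v = fvec_add p d u w"
  shows "v = w"
proof
  fix i show "v i = w i"
  proof (cases "i < d")
    case True
    with assms(3) have "(u i + v i) mod p = (u i + w i) mod p"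
      by (metis fvec_add_def)
    then have "((u i + v i) - u i) mod p = ((u i + w i) - u i) mod p"
      by (metis mod_diff_left_eq)
    then show ?thesis using fvecs_mod[OF assms(1)] fvecs_mod[OF assms(2)] by simp
  next
    case False then show ?thesis using assms by (simp add: fvecsD)
  qed
qed

definition fvec_neg :: "int \<Rightarrow> (nat \<Rightarrow> int) \<Rightarrow> (nat \<Rightarrow> int)" where
  "fvec_neg p v = (\<lambda>i. (- v i) mod p)"

lemma fvec_neg_closed: "0 < p \<Longrightarrow> v \<in> fvecs p d \<Longrightarrow> fvec_neg p v \<in> fvecs p d"
  by (auto simp: fvecs_def fvec_neg_def)

lemma fvec_add_left_neg: "v \<in> fvecs p d \<Longrightarrow> fvec_add p d (fvec_neg p v) v = fvec_zero"
  by (auto simp: fvec_add_def fvec_neg_def fvec_zero_def mod_simps)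

definition fvec_smult :: "int \<Rightarrow> int \<Rightarrow> (nat \<Rightarrow> int) \<Rightarrow> (nat \<Rightarrow> int)" where
  "fvec_smult p c v = (\<lambda>i. (c * v i) mod p)"

lemma fvec_smult_closed: "0 < p \<Longrightarrow> v \<in> fvecs p d \<Longrightarrow> fvec_smult p c v \<in> fvecs p d"
  by (auto simp: fvecs_def fvec_smult_def)

lemma fvec_smult_zero: "fvec_smult p 0 v = fvec_zero"
  by (auto simp: fvec_smult_def fvec_zero_def)

lemma fvec_smult_self: "fvec_smult p p v = fvec_zero"
  by (auto simp: fvec_smult_def fvec_zero_def)

lemma fvec_smult_Suc:
  "v \<in> fvecs p d \<Longrightarrow> fvec_smult p (int (Suc n)) v = fvec_add p d (fvec_smult p (int n) v) v"
  by (auto simp: fvec_smult_def fvec_add_def fvecsD mod_simps distrib_right add.commute)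

lemma fvecs_Suc:
  assumes "0 < p"
  shows "fvecs p (Suc d) = (\<lambda>(v, c). v(d := c)) ` (fvecs p d \<times> {0..<p})"
proof (intro equalityI subsetI)
  fix x assume x: "x \<in> fvecs p (Suc d)"
  have "x = (\<lambda>(v, c). v(d := c)) (x(d := 0), x d)" by simp
  moreover have "(x(d := 0), x d) \<in> fvecs p d \<times> {0..<p}"
    using x assms by (auto simp: fvecs_def)
  ultimately show "x \<in> (\<lambda>(v, c). v(d := c)) ` (fvecs p d \<times> {0..<p})" by blast
qed (auto simp: fvecs_def)

lemma finite_card_fvecs: "0 < p \<Longrightarrow> finite (fvecs p d) \<and> card (fvecs p d) = nat p ^ d"
proof (induction d)
  case 0
  have "fvecs p 0 = {fvec_zero}" using 0 by (auto simp: fvecs_def fvec_zero_def)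
  then show ?case by simp
next
  case (Suc d)
  have "inj_on (\<lambda>(v, c). v(d := c)) (fvecs p d \<times> {0..<p})"
  proof (rule inj_onI, clarify)
    fix v c w e assume "v \<in> fvecs p d" "w \<in> fvecs p d" "v(d := c) = w(d := e)"
    then show "v = w \<and> c = e" by (metis fun_upd_idem fun_upd_same fun_upd_upd fvecsD(2) order_refl)
  qed
  then have "card (fvecs p (Suc d)) = card (fvecs p d \<times> {0..<p})"
    by (simp add: fvecs_Suc[OF Suc.prems] card_image)
  also have "\<dots> = nat p ^ Suc d" using Suc by (simp add: card_cartesian_product)
  finally show ?case using fvecs_Suc[OF Suc.prems] Suc by simp
qed

lemma fmat_act_fvec_zero: "fmat_act p d A fvec_zero = fvec_zero"
  by (auto simp: fmat_act_def fvec_zero_def)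

lemma fmat_act_fvec_add:
  "fmat_act p d A (fvec_add p d v w) = fvec_add p d (fmat_act p d A v) (fmat_act p d A w)"
proof -
  have "(\<Sum>k<d. A i k * ((v k + w k) mod p)) mod p
      = ((\<Sum>k<d. A i k * v k) mod p + (\<Sum>k<d. A i k * w k) mod p) mod p" for i
  proof -
    have "(\<Sum>k<d. A i k * ((v k + w k) mod p)) mod p = (\<Sum>k<d. (A i k * ((v k + w k) mod p)) mod p) mod p"
      by (simp add: mod_sum_eq)
    also have "\<dots> = (\<Sum>k<d. (A i k * (v k + w k)) mod p) mod p"
      by (simp add: mod_mult_right_eq)
    also have "\<dots> = (\<Sum>k<d. A i k * v k + A i k * w k) mod p"
      by (simp add: mod_sum_eq distrib_left)
    also have "\<dots> = ((\<Sum>k<d. A i k * v k) mod p + (\<Sum>k<d. A i k * w k) mod p) mod p"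
      by (simp add: sum.distrib mod_add_eq)
    finally show ?thesis .
  qed
  moreover have "(\<Sum>k<d. A i k * (if k < d then (v k + w k) mod p else 0))
      = (\<Sum>k<d. A i k * ((v k + w k) mod p))" for i
    by (rule sum.cong) auto
  ultimately show ?thesis by (auto simp: fmat_act_def fvec_add_def)
qed

lemma fmat_act_fmat_mult:
  "fmat_act p d (fmat_mult p d A B) v = fmat_act p d A (fmat_act p d B v)"
proof -
  have "(\<Sum>k<d. ((\<Sum>l<d. A i l * B l k) mod p) * v k) mod p
      = (\<Sum>l<d. A i l * ((\<Sum>k<d. B l k * v k) mod p)) mod p" for i
  proof -
    have "(\<Sum>k<d. ((\<Sum>l<d. A i l * B l k) mod p) * v k) mod p
        = (\<Sum>k<d. (((\<Sum>l<d. A i l * B l k) mod p) * v k) mod p) mod p"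
      by (simp add: mod_sum_eq)
    also have "\<dots> = (\<Sum>k<d. ((\<Sum>l<d. A i l * B l k) * v k) mod p) mod p"
      by (simp add: mod_mult_left_eq)
    also have "\<dots> = (\<Sum>k<d. \<Sum>l<d. A i l * B l k * v k) mod p"
      by (simp add: mod_sum_eq sum_distrib_right)
    also have "\<dots> = (\<Sum>l<d. \<Sum>k<d. A i l * (B l k * v k)) mod p"
      by (subst sum.swap) (simp add: mult.assoc)
    also have "\<dots> = (\<Sum>l<d. (A i l * (\<Sum>k<d. B l k * v k)) mod p) mod p"
      by (simp add: mod_sum_eq sum_distrib_left)
    also have "\<dots> = (\<Sum>l<d. (A i l * ((\<Sum>k<d. B l k * v k) mod p)) mod p) mod p"
      by (simp add: mod_mult_right_eq)
    also have "\<dots> = (\<Sum>l<d. A i l * ((\<Sum>k<d. B l k * v k) mod p)) mod p"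
      by (simp add: mod_sum_eq)
    finally show ?thesis .
  qed
  moreover have "(\<Sum>k<d. f k * (if k < d then g k else 0)) = (\<Sum>k<d. f k * g k)"
    for f g :: "nat \<Rightarrow> int"
    by (rule sum.cong) auto
  moreover have "(\<Sum>k<d. (if i < d \<and> k < d then g k else 0) * f k)
      = (if i < d then (\<Sum>k<d. g k * f k) else 0)" for f g :: "nat \<Rightarrow> int" and i
    by (auto intro: sum.cong)
  ultimately show ?thesis by (auto simp: fmat_act_def fmat_mult_def)
qed

lemma fmat_act_fmat_one: "v \<in> fvecs p d \<Longrightarrow> fmat_act p d (fmat_one d) v = v"
proof (rule ext)
  fix i assume v: "v \<in> fvecs p d"
  show "fmat_act p d (fmat_one d) v i = v i"
  proof (cases "i < d")
    case True
    have "(\<Sum>k<d. fmat_one d i k * v k) = (\<Sum>k\<in>{i}. v k)"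
      by (rule sum.mono_neutral_cong_right) (use True in \<open>auto simp: fmat_one_def\<close>)
    then show ?thesis using True fvecs_mod[OF v] by (simp add: fmat_act_def)
  next
    case False then show ?thesis using v by (simp add: fmat_act_def fvecsD)
  qed
qed

definition fvec_unit :: "nat \<Rightarrow> nat \<Rightarrow> int" where
  "fvec_unit j = (\<lambda>i. if i = j then 1 else 0)"

lemma fvec_unit_closed: "1 < p \<Longrightarrow> j < d \<Longrightarrow> fvec_unit j \<in> fvecs p d"
  by (auto simp: fvecs_def fvec_unit_def)

lemma fmat_act_fvec_unit: "A \<in> fmats p d \<Longrightarrow> j < d \<Longrightarrow> fmat_act p d A (fvec_unit j) i = A i j"
proof -
  assume A: "A \<in> fmats p d" and j: "j < d"
  have "(\<Sum>k<d. A i k * fvec_unit j k) = (\<Sum>k\<in>{j}. A i k)"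
    by (rule sum.mono_neutral_cong_right) (use j in \<open>auto simp: fvec_unit_def\<close>)
  then show ?thesis using A j by (auto simp: fmat_act_def fmatsD)
qed

lemma fmats_eqI:
  assumes "1 < p" "A \<in> fmats p d" "B \<in> fmats p d"
    and "\<And>v. v \<in> fvecs p d \<Longrightarrow> fmat_act p d A v = fmat_act p d B v"
  shows "A = B"
proof (intro ext)
  fix i j show "A i j = B i j"
  proof (cases "j < d")
    case True
    then show ?thesis
      using assms(4)[OF fvec_unit_closed[OF assms(1) True]]
        fmat_act_fvec_unit[OF assms(2) True, of i] fmat_act_fvec_unit[OF assms(3) True, of i]
      by simp
  next
    case False then show ?thesis using assms by (simp add: fmatsD)
  qed
qed

lemma additive_fvec_zero:
  assumes "0 < p" and closed: "\<And>v. v \<in> fvecs p d \<Longrightarrow> T v \<in> fvecs p d"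
    and add: "\<And>v w. v \<in> fvecs p d \<Longrightarrow> w \<in> fvecs p d \<Longrightarrow> T (fvec_add p d v w) = fvec_add p d (T v) (T w)"
  shows "T fvec_zero = fvec_zero"
proof -
  have z: "fvec_zero \<in> fvecs p d" using assms(1) by (rule fvec_zero_closed)
  have "fvec_add p d (T fvec_zero) (T fvec_zero) = T (fvec_add p d fvec_zero fvec_zero)"
    using add[OF z z] by simp
  also have "\<dots> = fvec_add p d (T fvec_zero) fvec_zero"
    using fvec_add_zero_left[OF z] fvec_add_zero_right[OF closed[OF z]] by simp
  finally show ?thesis using fvec_add_left_cancel closed[OF z] z by blast
qed

lemma additive_fvec_smult:
  assumes "0 < p" and closed: "\<And>v. v \<in> fvecs p d \<Longrightarrow> T v \<in> fvecs p d"
    and add: "\<And>v w. v \<in> fvecs p d \<Longrightarrow> w \<in> fvecs p d \<Longrightarrow> T (fvec_add p d v w) = fvec_add p d (T v) (T w)"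
    and v: "v \<in> fvecs p d"
  shows "T (fvec_smult p (int n) v) = fvec_smult p (int n) (T v)"
proof (induction n)
  case 0 then show ?case using additive_fvec_zero[of p d T, OF assms(1) closed add] by (simp add: fvec_smult_zero)
next
  case (Suc n)
  have "T (fvec_smult p (int (Suc n)) v) = T (fvec_add p d (fvec_smult p (int n) v) v)"
    using fvec_smult_Suc[OF v] by simp
  also have "\<dots> = fvec_add p d (T (fvec_smult p (int n) v)) (T v)"
    using add[OF fvec_smult_closed[OF assms(1) v] v] .
  also have "\<dots> = fvec_smult p (int (Suc n)) (T v)"
    using Suc fvec_smult_Suc[OF closed[OF v]] by simp
  finally show ?case .
qed

definition fvec_trunc :: "nat \<Rightarrow> (nat \<Rightarrow> int) \<Rightarrow> (nat \<Rightarrow> int)" where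
  "fvec_trunc n v = (\<lambda>i. if i < n then v i else 0)"

lemma fvec_trunc_closed: "v \<in> fvecs p d \<Longrightarrow> fvec_trunc n v \<in> fvecs p d"
  by (auto simp: fvecs_def fvec_trunc_def)

lemma fvec_trunc_Suc:
  "1 < p \<Longrightarrow> v \<in> fvecs p d \<Longrightarrow> n < d \<Longrightarrow>
   fvec_trunc (Suc n) v = fvec_add p d (fvec_trunc n v) (fvec_smult p (v n) (fvec_unit n))"
  by (auto simp: fvec_trunc_def fvec_add_def fvec_smult_def fvec_unit_def fvecsD fvecs_mod
      less_Suc_eq)

lemma fvec_trunc_dim: "v \<in> fvecs p d \<Longrightarrow> fvec_trunc d v = v"
  by (auto simp: fvec_trunc_def fvecsD)

lemma additive_eq_fmat_act:
  assumes p: "1 < p" and closed: "\<And>v. v \<in> fvecs p d \<Longrightarrow> T v \<in> fvecs p d"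
    and add: "\<And>v w. v \<in> fvecs p d \<Longrightarrow> w \<in> fvecs p d \<Longrightarrow> T (fvec_add p d v w) = fvec_add p d (T v) (T w)"
  shows "\<exists>M \<in> fmats p d. \<forall>v \<in> fvecs p d. fmat_act p d M v = T v"
proof -
  define M where "M = (\<lambda>i j. if i < d \<and> j < d then T (fvec_unit j) i else 0)"
  have "0 \<le> T (fvec_unit j) i \<and> T (fvec_unit j) i < p" if "j < d" for i j
    using fvecsD(1)[OF closed[OF fvec_unit_closed[OF p that]]] .
  then have M: "M \<in> fmats p d" using p by (auto simp: M_def fmats_def)
  have trunc: "T (fvec_trunc n v) i = (if i < d then (\<Sum>j<n. M i j * v j) mod p else 0)"
    if v: "v \<in> fvecs p d" and "n \<le> d" for v n i
    using \<open>n \<le> d\<close>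
  proof (induction n)
    case 0
    have "fvec_trunc 0 v = fvec_zero" by (auto simp: fvec_trunc_def fvec_zero_def)
    then show ?case using additive_fvec_zero[of p d T, OF _ closed add] p by (simp add: fvec_zero_def)
  next
    case (Suc n)
    then have n: "n < d" by simp
    have vn: "v n = int (nat (v n))" using fvecsD[OF v] by simp
    have e: "fvec_unit n \<in> fvecs p d" using fvec_unit_closed[OF p n] .
    have "T (fvec_trunc (Suc n) v)
        = fvec_add p d (T (fvec_trunc n v)) (T (fvec_smult p (v n) (fvec_unit n)))"
      using fvec_trunc_Suc[OF p v n] add[OF fvec_trunc_closed[OF v] fvec_smult_closed[OF _ e]] p
      by simp
    also have "T (fvec_smult p (v n) (fvec_unit n)) = fvec_smult p (v n) (T (fvec_unit n))"
      using additive_fvec_smult[of p d T, OF _ closed add e, of "nat (v n)"] p vn by simp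
    finally show ?case using Suc n
      by (auto simp: fvec_add_def fvec_smult_def M_def mod_simps mult.commute)
  qed
  have "fmat_act p d M v = T v" if "v \<in> fvecs p d" for v
  proof
    fix i
    show "fmat_act p d M v i = T v i"
      using trunc[OF that order_refl] fvec_trunc_dim[OF that]
      by (simp add: fmat_act_def)
  qed
  with M show ?thesis by blast
qed

lemma GL_carrier:
  "A \<in> carrier (GL p d) \<longleftrightarrow> A \<in> fmats p d \<and>
     (\<exists>B \<in> fmats p d. fmat_mult p d A B = fmat_one d \<and> fmat_mult p d B A = fmat_one d)"
  by (simp add: GL_def)

lemma GL_mult: "A \<otimes>\<^bsub>GL p d\<^esub> B = fmat_mult p d A B"
  by (simp add: GL_def)

lemma fmat_act_bij_betw:
  assumes "0 < p" "A \<in> carrier (GL p d)"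
  shows "bij_betw (fmat_act p d A) (fvecs p d) (fvecs p d)"
proof -
  obtain B where "fmat_mult p d A B = fmat_one d" "fmat_mult p d B A = fmat_one d"
    using assms(2) by (auto simp: GL_carrier)
  then show ?thesis
    by (intro bij_betw_byWitness[where f' = "fmat_act p d B"])
       (auto simp: fmat_act_fmat_mult[symmetric] fmat_act_fmat_one fmat_act_closed assms(1))
qed

lemma GL_idempotent_act:
  assumes "0 < p" "A \<in> carrier (GL p d)" "fmat_mult p d A A = A" "v \<in> fvecs p d"
  shows "fmat_act p d A v = v"
proof -
  have "fmat_act p d A (fmat_act p d A v) = fmat_act p d A v"
    by (metis assms(3) fmat_act_fmat_mult)
  then show ?thesis
    using bij_betw_inv_into_left[OF fmat_act_bij_betw[OF assms(1,2)]] assms(4)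
    by (metis fmat_act_closed[OF assms(1)])
qed

lemma additive_bij_betw_GL:
  assumes p: "1 < p" and bij: "bij_betw T (fvecs p d) (fvecs p d)"
    and add: "\<And>v w. v \<in> fvecs p d \<Longrightarrow> w \<in> fvecs p d \<Longrightarrow> T (fvec_add p d v w) = fvec_add p d (T v) (T w)"
  shows "\<exists>M \<in> carrier (GL p d). \<forall>v \<in> fvecs p d. fmat_act p d M v = T v"
proof -
  have p0: "0 < p" using p by simp
  define S where "S = inv_into (fvecs p d) T"
  have T_closed: "T v \<in> fvecs p d" if "v \<in> fvecs p d" for v
    using bij_betwE[OF bij] that by blast
  have S_closed: "S v \<in> fvecs p d" if "v \<in> fvecs p d" for v
    using bij_betwE[OF bij_betw_inv_into[OF bij]] that by (auto simp: S_def)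
  have TS: "T (S v) = v" if "v \<in> fvecs p d" for v
    using bij_betw_inv_into_right[OF bij that] by (simp add: S_def)
  have ST: "S (T v) = v" if "v \<in> fvecs p d" for v
    using bij_betw_inv_into_left[OF bij that] by (simp add: S_def)
  have S_add: "S (fvec_add p d v w) = fvec_add p d (S v) (S w)"
    if "v \<in> fvecs p d" "w \<in> fvecs p d" for v w
    using ST[OF fvec_add_closed[OF p0]] add[OF S_closed S_closed] TS that by metis
  obtain M where M: "M \<in> fmats p d" and M_act: "\<And>v. v \<in> fvecs p d \<Longrightarrow> fmat_act p d M v = T v"
    using additive_eq_fmat_act[of p d T, OF p T_closed add] by blast
  obtain N where N: "N \<in> fmats p d" and N_act: "\<And>v. v \<in> fvecs p d \<Longrightarrow> fmat_act p d N v = S v"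
    using additive_eq_fmat_act[of p d S, OF p S_closed S_add] by blast
  have "fmat_mult p d M N = fmat_one d" "fmat_mult p d N M = fmat_one d"
    by (rule fmats_eqI[OF p fmat_mult_closed[OF p0] fmat_one_closed[OF p]];
        simp add: fmat_act_fmat_mult fmat_act_fmat_one M_act N_act S_closed T_closed TS ST)+
  with M N have "M \<in> carrier (GL p d)" by (auto simp: GL_carrier)
  with M_act show ?thesis by blast
qed

lemma hom_GL_act_mult:
  "psi \<in> hom D (GL p d) \<Longrightarrow> g \<in> carrier D \<Longrightarrow> h \<in> carrier D \<Longrightarrow>
   fmat_act p d (psi (g \<otimes>\<^bsub>D\<^esub> h)) v = fmat_act p d (psi g) (fmat_act p d (psi h) v)"
  using hom_mult[of psi D "GL p d" g h] by (simp add: GL_mult fmat_act_fmat_mult)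

lemma hom_GL_act_one:
  assumes "0 < p" "monoid D" "psi \<in> hom D (GL p d)" "v \<in> fvecs p d"
  shows "fmat_act p d (psi \<one>\<^bsub>D\<^esub>) v = v"
proof -
  have one: "\<one>\<^bsub>D\<^esub> \<in> carrier D" using monoid.one_closed[OF assms(2)] .
  have "fmat_mult p d (psi \<one>\<^bsub>D\<^esub>) (psi \<one>\<^bsub>D\<^esub>) = psi \<one>\<^bsub>D\<^esub>"
    using hom_mult[OF assms(3) one one] monoid.l_one[OF assms(2) one] by (simp add: GL_mult)
  then show ?thesis using GL_idempotent_act[OF assms(1) hom_in_carrier[OF assms(3) one] _ assms(4)] by simp
qed

section \<open>The semidirect product\<close>

lemma semidirect_carrier: "carrier (semidirect p d D psi) = fvecs p d \<times> carrier D"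
  by (simp add: semidirect_def)

lemma semidirect_mult:
  "(v, g) \<otimes>\<^bsub>semidirect p d D psi\<^esub> (w, h) = (fvec_add p d v (fmat_act p d (psi g) w), g \<otimes>\<^bsub>D\<^esub> h)"
  by (simp add: semidirect_def)

lemma semidirect_one: "\<one>\<^bsub>semidirect p d D psi\<^esub> = (fvec_zero, \<one>\<^bsub>D\<^esub>)"
  by (simp add: semidirect_def)

lemma group_semidirect:
  assumes p: "1 < p" and D: "group D" and psi: "psi \<in> hom D (GL p d)"
  shows "group (semidirect p d D psi)"
proof (rule groupI)
  let ?G = "semidirect p d D psi"
  interpret D: group D by (rule D)
  have p0: "0 < p" using p by simp
  show "x \<otimes>\<^bsub>?G\<^esub> y \<in> carrier ?G" if "x \<in> carrier ?G" "y \<in> carrier ?G" for x y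
    using that p0 by (auto simp: semidirect_carrier semidirect_mult fvec_add_closed)
  show "\<one>\<^bsub>?G\<^esub> \<in> carrier ?G"
    using p0 by (simp add: semidirect_carrier semidirect_one fvec_zero_closed)
  show "x \<otimes>\<^bsub>?G\<^esub> y \<otimes>\<^bsub>?G\<^esub> z = x \<otimes>\<^bsub>?G\<^esub> (y \<otimes>\<^bsub>?G\<^esub> z)"
    if "x \<in> carrier ?G" "y \<in> carrier ?G" "z \<in> carrier ?G" for x y z
    using that hom_GL_act_mult[OF psi]
    by (auto simp: semidirect_carrier semidirect_mult fmat_act_fvec_add fvec_add_assoc D.m_assoc)
  show "\<one>\<^bsub>?G\<^esub> \<otimes>\<^bsub>?G\<^esub> x = x" if "x \<in> carrier ?G" for x
    using that hom_GL_act_one[OF p0 D.is_monoid psi]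
    by (auto simp: semidirect_carrier semidirect_one semidirect_mult fvec_add_zero_left)
  show "\<exists>y \<in> carrier ?G. y \<otimes>\<^bsub>?G\<^esub> x = \<one>\<^bsub>?G\<^esub>" if x_in: "x \<in> carrier ?G" for x
  proof -
    obtain v g where x: "x = (v, g)" and v: "v \<in> fvecs p d" and g: "g \<in> carrier D"
      using x_in by (cases x) (auto simp: semidirect_carrier)
    define w where "w = fmat_act p d (psi (inv\<^bsub>D\<^esub> g)) v"
    have w: "w \<in> fvecs p d" using p0 by (simp add: w_def fmat_act_closed)
    have "(fvec_neg p w, inv\<^bsub>D\<^esub> g) \<otimes>\<^bsub>?G\<^esub> x = \<one>\<^bsub>?G\<^esub>"
      using fvec_add_left_neg[OF w] g by (simp add: x semidirect_mult semidirect_one w_def)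
    moreover have "(fvec_neg p w, inv\<^bsub>D\<^esub> g) \<in> carrier ?G"
      using fvec_neg_closed[OF p0 w] g by (simp add: semidirect_carrier)
    ultimately show ?thesis by blast
  qed
qed

lemma snd_semidirect_hom: "snd \<in> hom (semidirect p d D psi) D"
  by (rule homI) (auto simp: semidirect_carrier semidirect_mult)

lemma semidirect_complement_hom:
  assumes "0 < p"
  shows "(\<lambda>g. (fvec_zero, g)) \<in> hom D (semidirect p d D psi)"
  by (rule homI)
     (auto simp: semidirect_carrier semidirect_mult fmat_act_fvec_zero fvec_zero_closed assms
      fvec_add_zero_left)

lemma semidirect_vector_mult_complement:
  assumes "monoid D" "v \<in> fvecs p d" "g \<in> carrier D"
  shows "(v, \<one>\<^bsub>D\<^esub>) \<otimes>\<^bsub>semidirect p d D psi\<^esub> (fvec_zero, g) = (v, g)"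
  using assms by (simp add: semidirect_mult fmat_act_fvec_zero fvec_add_zero_right)

lemma semidirect_complement_mult_vector:
  assumes "0 < p" "monoid D" "g \<in> carrier D"
  shows "(fvec_zero, g) \<otimes>\<^bsub>semidirect p d D psi\<^esub> (v, \<one>\<^bsub>D\<^esub>) = (fmat_act p d (psi g) v, g)"
  using assms by (simp add: semidirect_mult fvec_add_zero_left fmat_act_closed)

lemma semidirect_vector_pow:
  assumes "0 < p" "monoid D" "psi \<in> hom D (GL p d)" "v \<in> fvecs p d"
  shows "(v, \<one>\<^bsub>D\<^esub>) [^]\<^bsub>semidirect p d D psi\<^esub> n = (fvec_smult p (int n) v, \<one>\<^bsub>D\<^esub>)"
proof (induction n)
  case 0 then show ?case by (simp add: semidirect_one fvec_smult_zero)
next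
  case (Suc n)
  then show ?case
    using hom_GL_act_one[OF assms] fvec_smult_Suc[OF assms(4), of n] monoid.one_closed[OF assms(2)]
    by (simp add: semidirect_mult monoid.l_one[OF assms(2)])
qed

lemma (in group) pow_prime_eq_one_iff:
  assumes "Factorial_Ring.prime q" "\<not> q dvd order G" "g \<in> carrier G"
  shows "g [^] q = \<one> \<longleftrightarrow> g = \<one>"
proof
  assume "g [^] q = \<one>"
  then have "ord g dvd q" using pow_eq_id[OF assms(3)] by simp
  then have "ord g = 1 \<or> ord g = q" using assms(1) by (simp add: prime_nat_iff)
  moreover have "ord g dvd order G" using ord_dvd_group_order[OF assms(3)] .
  ultimately show "g = \<one>" using assms(2,3) ord_eq_1 by fastforce
qed simp

lemma semidirect_pow_prime_eq_one_iff:
  assumes p: "Factorial_Ring.prime p" and D: "group D" and psi: "psi \<in> hom D (GL p d)"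
    and coprime: "\<not> p dvd int (order D)" and x: "x \<in> carrier (semidirect p d D psi)"
  shows "x [^]\<^bsub>semidirect p d D psi\<^esub> nat p = \<one>\<^bsub>semidirect p d D psi\<^esub> \<longleftrightarrow> snd x = \<one>\<^bsub>D\<^esub>"
proof -
  interpret D: group D by (rule D)
  have p1: "1 < p" using p by (simp add: prime_gt_1_int)
  obtain v g where xvg: "x = (v, g)" and v: "v \<in> fvecs p d" and g: "g \<in> carrier D"
    using x by (cases x) (auto simp: semidirect_carrier)
  have pow_snd: "snd (x [^]\<^bsub>semidirect p d D psi\<^esub> nat p) = g [^]\<^bsub>D\<^esub> nat p"
    using hom_nat_pow[OF snd_semidirect_hom x group_semidirect[OF p1 D psi] D] xvg by simp
  have "g [^]\<^bsub>D\<^esub> nat p = \<one>\<^bsub>D\<^esub> \<longleftrightarrow> g = \<one>\<^bsub>D\<^esub>"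
    using D.pow_prime_eq_one_iff[OF _ _ g] p p1 coprime
    by (metis int_dvd_int_iff prime_int_nat_transfer int_nat_eq)
  moreover have "(v, \<one>\<^bsub>D\<^esub>) [^]\<^bsub>semidirect p d D psi\<^esub> nat p = \<one>\<^bsub>semidirect p d D psi\<^esub>"
    using semidirect_vector_pow[OF _ D.is_monoid psi v, of "nat p"] p1
    by (simp add: fvec_smult_self semidirect_one)
  ultimately show ?thesis
    using pow_snd xvg by (cases "g = \<one>\<^bsub>D\<^esub>") (auto simp: semidirect_one)
qed

section \<open>Isomorphisms between semidirect products\<close>

lemma iso_nat_pow_eq_one_iff:
  assumes "group G" "group H" "h \<in> iso G H" "x \<in> carrier G"
  shows "h x [^]\<^bsub>H\<^esub> (n::nat) = \<one>\<^bsub>H\<^esub> \<longleftrightarrow> x [^]\<^bsub>G\<^esub> n = \<one>\<^bsub>G\<^esub>"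
proof -
  have "inj_on h (carrier G)" using assms(3) by (simp add: iso_iff)
  interpret group_hom G H h
    using assms(1-3) by (simp add: group_hom_def group_hom_axioms_def iso_imp_homomorphism)
  from \<open>inj_on h (carrier G)\<close> show ?thesis
    using assms(4) by (auto simp: hom_nat_pow[symmetric] inj_on_one_iff)
qed

lemma semidirect_iso_map_prod:
  assumes p: "0 < p" and \<sigma>: "\<sigma> \<in> iso D1 D2" and T: "T \<in> carrier (GL p d)"
    and intertwine: "\<And>g. g \<in> carrier D1 \<Longrightarrow> fmat_mult p d T (psi1 g) = fmat_mult p d (psi2 (\<sigma> g)) T"
  shows "map_prod (fmat_act p d T) \<sigma> \<in> iso (semidirect p d D1 psi1) (semidirect p d D2 psi2)"
proof (rule isoI)
  have \<sigma>_hom: "\<sigma> \<in> hom D1 D2" and \<sigma>_bij: "bij_betw \<sigma> (carrier D1) (carrier D2)"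
    using \<sigma> by (auto simp: iso_def)
  show bij: "bij_betw (map_prod (fmat_act p d T) \<sigma>)
      (carrier (semidirect p d D1 psi1)) (carrier (semidirect p d D2 psi2))"
    unfolding semidirect_carrier by (rule bij_betw_map_prod[OF fmat_act_bij_betw[OF p T] \<sigma>_bij])
  have "fmat_act p d T (fmat_act p d (psi1 g) w) = fmat_act p d (psi2 (\<sigma> g)) (fmat_act p d T w)"
    if "g \<in> carrier D1" for g w
    using intertwine[OF that] by (metis fmat_act_fmat_mult)
  then show "map_prod (fmat_act p d T) \<sigma> \<in> hom (semidirect p d D1 psi1) (semidirect p d D2 psi2)"
    using bij_betwE[OF bij] hom_mult[OF \<sigma>_hom]
    by (intro homI) (auto simp: semidirect_carrier semidirect_mult fmat_act_fvec_add)
qed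

lemma rep_equiv_imp_semidirect_iso:
  assumes p: "0 < p" and \<sigma>: "\<sigma> \<in> iso D1 D2" and equiv: "rep_equiv D1 p d1 d2 psi1 (psi2 \<circ> \<sigma>)"
  shows "\<exists>f \<in> iso (semidirect p d1 D1 psi1) (semidirect p d2 D2 psi2).
           f ` complement D1 = complement D2 \<and> (\<forall>g \<in> carrier D1. f (fvec_zero, g) = (fvec_zero, \<sigma> g))"
proof -
  obtain T where "d2 = d1" and T: "T \<in> carrier (GL p d1)"
    and "\<And>g. g \<in> carrier D1 \<Longrightarrow> fmat_mult p d1 T (psi1 g) = fmat_mult p d1 (psi2 (\<sigma> g)) T"
    using equiv by (auto simp: rep_equiv_def)
  then have iso: "map_prod (fmat_act p d1 T) \<sigma> \<in> iso (semidirect p d1 D1 psi1) (semidirect p d2 D2 psi2)"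
    using semidirect_iso_map_prod[OF p \<sigma> T] by simp
  have on_complement: "map_prod (fmat_act p d1 T) \<sigma> (fvec_zero, g) = (fvec_zero, \<sigma> g)" for g
    by (simp add: fmat_act_fvec_zero)
  have "\<sigma> ` carrier D1 = carrier D2" using \<sigma> by (simp add: iso_iff)
  then have "map_prod (fmat_act p d1 T) \<sigma> ` complement D1 = complement D2"
    unfolding complement_def by (intro map_prod_surj_on) (auto simp: fmat_act_fvec_zero)
  with iso on_complement show ?thesis by blast
qed

locale semidirect_iso =
  fixes p :: int and d1 d2 :: nat
    and D1 :: "('a, 'c) monoid_scheme" and D2 :: "('b, 'e) monoid_scheme"
    and psi1 :: "'a \<Rightarrow> nat \<Rightarrow> nat \<Rightarrow> int" and psi2 :: "'b \<Rightarrow> nat \<Rightarrow> nat \<Rightarrow> int"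
    and f :: "(nat \<Rightarrow> int) \<times> 'a \<Rightarrow> (nat \<Rightarrow> int) \<times> 'b"
  assumes prime: "Factorial_Ring.prime p"
    and D1: "group D1" and D2: "group D2"
    and psi1: "psi1 \<in> hom D1 (GL p d1)" and psi2: "psi2 \<in> hom D2 (GL p d2)"
    and coprime1: "\<not> p dvd int (order D1)" and coprime2: "\<not> p dvd int (order D2)"
    and f_iso: "f \<in> iso (semidirect p d1 D1 psi1) (semidirect p d2 D2 psi2)"
begin

abbreviation "G1 \<equiv> semidirect p d1 D1 psi1"
abbreviation "G2 \<equiv> semidirect p d2 D2 psi2"

lemma p_pos: "0 < p" and p_gt_1: "1 < p"
  using prime by (simp_all add: prime_gt_0_int prime_gt_1_int)

lemma f_hom: "f \<in> hom G1 G2"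
  using f_iso by (simp add: iso_iff)

lemma snd_f_eq_one_iff:
  assumes "x \<in> carrier G1"
  shows "snd (f x) = \<one>\<^bsub>D2\<^esub> \<longleftrightarrow> snd x = \<one>\<^bsub>D1\<^esub>"
  using semidirect_pow_prime_eq_one_iff[OF prime D2 psi2 coprime2 hom_in_carrier[OF f_hom assms]]
    iso_nat_pow_eq_one_iff[OF group_semidirect[OF p_gt_1 D1 psi1] group_semidirect[OF p_gt_1 D2 psi2]
      f_iso assms]
    semidirect_pow_prime_eq_one_iff[OF prime D1 psi1 coprime1 assms]
  by simp

definition lin :: "(nat \<Rightarrow> int) \<Rightarrow> (nat \<Rightarrow> int)" where
  "lin v = fst (f (v, \<one>\<^bsub>D1\<^esub>))"

definition quot :: "'a \<Rightarrow> 'b" where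
  "quot g = snd (f (fvec_zero, g))"

lemma f_vector:
  assumes "v \<in> fvecs p d1"
  shows "f (v, \<one>\<^bsub>D1\<^esub>) = (lin v, \<one>\<^bsub>D2\<^esub>)" and "lin v \<in> fvecs p d2"
proof -
  have v1: "(v, \<one>\<^bsub>D1\<^esub>) \<in> carrier G1"
    using assms group.is_monoid[OF D1] by (simp add: semidirect_carrier)
  then show "f (v, \<one>\<^bsub>D1\<^esub>) = (lin v, \<one>\<^bsub>D2\<^esub>)"
    using snd_f_eq_one_iff by (metis lin_def prod.collapse snd_conv)
  show "lin v \<in> fvecs p d2"
    using hom_in_carrier[OF f_hom v1] by (auto simp: lin_def semidirect_carrier mem_Times_iff)
qed

lemma lin_bij_betw: "bij_betw lin (fvecs p d1) (fvecs p d2)"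
proof (rule bij_betw_imageI)
  show "inj_on lin (fvecs p d1)"
  proof (rule inj_onI)
    fix v w assume v: "v \<in> fvecs p d1" and w: "w \<in> fvecs p d1" and "lin v = lin w"
    then have "f (v, \<one>\<^bsub>D1\<^esub>) = f (w, \<one>\<^bsub>D1\<^esub>)" by (simp add: f_vector)
    moreover have "(v, \<one>\<^bsub>D1\<^esub>) \<in> carrier G1" "(w, \<one>\<^bsub>D1\<^esub>) \<in> carrier G1"
      using v w group.is_monoid[OF D1] by (simp_all add: semidirect_carrier)
    ultimately show "v = w" using f_iso by (auto simp: iso_iff dest: inj_onD)
  qed
  show "lin ` fvecs p d1 = fvecs p d2"
  proof (intro equalityI subsetI)
    fix w assume w: "w \<in> fvecs p d2"
    then have "(w, \<one>\<^bsub>D2\<^esub>) \<in> f ` carrier G1"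
      using f_iso group.is_monoid[OF D2] by (simp add: iso_iff semidirect_carrier)
    then obtain x where x: "x \<in> carrier G1" and fx: "f x = (w, \<one>\<^bsub>D2\<^esub>)" by auto
    then obtain v where "x = (v, \<one>\<^bsub>D1\<^esub>)" "v \<in> fvecs p d1"
      using snd_f_eq_one_iff[OF x] by (cases x) (auto simp: semidirect_carrier)
    with fx f_vector show "w \<in> lin ` fvecs p d1" by (metis image_eqI prod.inject)
  qed (use f_vector in auto)
qed

lemma dim_eq: "d2 = d1"
proof -
  have "card (fvecs p d1) = card (fvecs p d2)" using bij_betw_same_card[OF lin_bij_betw] .
  then have "nat p ^ d1 = nat p ^ d2" using finite_card_fvecs[OF p_pos] by metis
  then show ?thesis using p_gt_1 by simp
qed

lemma lin_add:
  assumes "v \<in> fvecs p d1" "w \<in> fvecs p d1"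
  shows "lin (fvec_add p d1 v w) = fvec_add p d1 (lin v) (lin w)"
proof -
  have "f (fvec_add p d1 v w, \<one>\<^bsub>D1\<^esub>) = f ((v, \<one>\<^bsub>D1\<^esub>) \<otimes>\<^bsub>G1\<^esub> (w, \<one>\<^bsub>D1\<^esub>))"
    using hom_GL_act_one[OF p_pos group.is_monoid[OF D1] psi1 assms(2)] group.is_monoid[OF D1]
    by (simp add: semidirect_mult)
  also have "\<dots> = (lin v, \<one>\<^bsub>D2\<^esub>) \<otimes>\<^bsub>G2\<^esub> (lin w, \<one>\<^bsub>D2\<^esub>)"
    using hom_mult[OF f_hom] assms f_vector group.is_monoid[OF D1] by (simp add: semidirect_carrier)
  also have "\<dots> = (fvec_add p d1 (lin v) (lin w), \<one>\<^bsub>D2\<^esub>)"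
    using hom_GL_act_one[OF p_pos group.is_monoid[OF D2] psi2 f_vector(2)[OF assms(2)]]
      group.is_monoid[OF D2] dim_eq
    by (simp add: semidirect_mult)
  finally show ?thesis
    using f_vector(1)[OF fvec_add_closed[OF p_pos]] by simp
qed

lemma quot_hom: "quot \<in> hom D1 D2"
proof -
  have "snd \<circ> (f \<circ> (\<lambda>g. (fvec_zero, g))) \<in> hom D1 D2"
    using hom_compose[OF hom_compose[OF semidirect_complement_hom[OF p_pos] f_hom] snd_semidirect_hom] .
  then show ?thesis by (simp add: quot_def[abs_def] comp_def)
qed

lemma quot_iso: "quot \<in> iso D1 D2"
proof -
  have complement_in: "(fvec_zero, g) \<in> carrier G1" if "g \<in> carrier D1" for g
    using that p_pos by (simp add: semidirect_carrier fvec_zero_closed)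
  have "h \<in> quot ` carrier D1" if h: "h \<in> carrier D2" for h
  proof -
    have "(fvec_zero, h) \<in> carrier G2"
      using h p_pos by (simp add: semidirect_carrier fvec_zero_closed)
    then have "(fvec_zero, h) \<in> f ` carrier G1"
      using f_iso by (simp add: iso_iff)
    then obtain v g where v: "v \<in> fvecs p d1" and g: "g \<in> carrier D1"
      and fvg: "f (v, g) = (fvec_zero, h)" by (auto simp: semidirect_carrier)
    have "f (v, g) = f (v, \<one>\<^bsub>D1\<^esub>) \<otimes>\<^bsub>G2\<^esub> f (fvec_zero, g)"
      using semidirect_vector_mult_complement[OF group.is_monoid[OF D1] v g]
        hom_mult[OF f_hom] complement_in[OF g] v group.is_monoid[OF D1]
      by (metis mem_Times_iff monoid.one_closed semidirect_carrier fst_conv snd_conv)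
    then have "h = \<one>\<^bsub>D2\<^esub> \<otimes>\<^bsub>D2\<^esub> quot g"
      using fvg f_vector[OF v] by (cases "f (fvec_zero, g)") (simp add: semidirect_mult quot_def)
    then have "h = quot g"
      using hom_in_carrier[OF quot_hom g] monoid.l_one[OF group.is_monoid[OF D2]] by simp
    with g show ?thesis by blast
  qed
  moreover have "g = \<one>\<^bsub>D1\<^esub>" if "g \<in> carrier D1" "quot g = \<one>\<^bsub>D2\<^esub>" for g
    using that snd_f_eq_one_iff[OF complement_in] by (simp add: quot_def)
  moreover have "group_hom D1 D2 quot"
    using D1 D2 quot_hom by (simp add: group_hom_def group_hom_axioms_def)
  ultimately show ?thesis by (auto simp: group_hom.iso_iff)
qed

lemma lin_intertwines:
  assumes g: "g \<in> carrier D1" and v: "v \<in> fvecs p d1"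
  shows "lin (fmat_act p d1 (psi1 g) v) = fmat_act p d1 (psi2 (quot g)) (lin v)"
proof -
  define w where "w = fmat_act p d1 (psi1 g) v"
  have w: "w \<in> fvecs p d1" using p_pos by (simp add: w_def fmat_act_closed)
  obtain u where u: "f (fvec_zero, g) = (u, quot g)" "u \<in> fvecs p d1"
    using hom_in_carrier[OF f_hom, of "(fvec_zero, g)"] g p_pos dim_eq
    by (cases "f (fvec_zero, g)") (auto simp: quot_def semidirect_carrier fvec_zero_closed)
  have in_G1: "(fvec_zero, g) \<in> carrier G1" "(v, \<one>\<^bsub>D1\<^esub>) \<in> carrier G1" "(w, \<one>\<^bsub>D1\<^esub>) \<in> carrier G1"
    using g v w p_pos group.is_monoid[OF D1] by (simp_all add: semidirect_carrier fvec_zero_closed)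
  have "(fvec_zero, g) \<otimes>\<^bsub>G1\<^esub> (v, \<one>\<^bsub>D1\<^esub>) = (w, \<one>\<^bsub>D1\<^esub>) \<otimes>\<^bsub>G1\<^esub> (fvec_zero, g)"
    using semidirect_complement_mult_vector[OF p_pos group.is_monoid[OF D1] g]
      semidirect_vector_mult_complement[OF group.is_monoid[OF D1] w g]
    by (simp add: w_def)
  then have "f (fvec_zero, g) \<otimes>\<^bsub>G2\<^esub> f (v, \<one>\<^bsub>D1\<^esub>) = f (w, \<one>\<^bsub>D1\<^esub>) \<otimes>\<^bsub>G2\<^esub> f (fvec_zero, g)"
    using hom_mult[OF f_hom] in_G1 by metis
  then have "fvec_add p d1 u (fmat_act p d1 (psi2 (quot g)) (lin v))
      = fvec_add p d1 (lin w) (fmat_act p d1 (psi2 \<one>\<^bsub>D2\<^esub>) u)"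
    using u(1) f_vector(1)[OF v] f_vector(1)[OF w] dim_eq by (simp add: semidirect_mult)
  also have "\<dots> = fvec_add p d1 u (lin w)"
    using hom_GL_act_one[OF p_pos group.is_monoid[OF D2] psi2] u(2) dim_eq
    by (simp add: fvec_add_commute)
  finally have "fmat_act p d1 (psi2 (quot g)) (lin v) = lin w"
    using fvec_add_left_cancel[OF fmat_act_closed[OF p_pos]] f_vector(2)[OF w] dim_eq by blast
  then show ?thesis by (simp add: w_def)
qed

lemma rep_equiv_quot: "rep_equiv D1 p d1 d2 psi1 (psi2 \<circ> quot)"
proof -
  have "bij_betw lin (fvecs p d1) (fvecs p d1)" using lin_bij_betw dim_eq by simp
  then obtain M where M: "M \<in> carrier (GL p d1)"
    and M_act: "\<And>v. v \<in> fvecs p d1 \<Longrightarrow> fmat_act p d1 M v = lin v"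
    using additive_bij_betw_GL[of p lin d1, OF p_gt_1 _ lin_add] by blast
  have "fmat_mult p d1 M (psi1 g) = fmat_mult p d1 (psi2 (quot g)) M" if "g \<in> carrier D1" for g
    using that lin_intertwines f_vector(2) dim_eq
    by (intro fmats_eqI[OF p_gt_1 fmat_mult_closed[OF p_pos] fmat_mult_closed[OF p_pos]])
       (simp add: fmat_act_fmat_mult fmat_act_closed[OF p_pos] M_act)
  with M dim_eq show ?thesis by (auto simp: rep_equiv_def)
qed

end

theorem lemma5p2:
  fixes p :: int and d1 d2 :: nat
    and D1 :: "('a, 'c) monoid_scheme" and D2 :: "('b, 'e) monoid_scheme"
    and psi1 :: "'a \<Rightarrow> nat \<Rightarrow> nat \<Rightarrow> int" and psi2 :: "'b \<Rightarrow> nat \<Rightarrow> nat \<Rightarrow> int"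
  assumes "Factorial_Ring.prime p"
    and "group D1" and "finite (carrier D1)"
    and "group D2" and "finite (carrier D2)"
    and "psi1 \<in> hom D1 (GL p d1)"
    and "psi2 \<in> hom D2 (GL p d2)"
    and "\<not> p dvd (int (order D1) * int (order D2))"
  shows "(semidirect p d1 D1 psi1 \<cong> semidirect p d2 D2 psi2 \<longleftrightarrow>
           (\<exists>\<sigma>. \<sigma> \<in> iso D1 D2 \<and> rep_equiv D1 p d1 d2 psi1 (psi2 \<circ> \<sigma>)))
       \<and> (\<forall>\<sigma>. \<sigma> \<in> iso D1 D2 \<and> rep_equiv D1 p d1 d2 psi1 (psi2 \<circ> \<sigma>) \<longrightarrow>
           (\<exists>f \<in> iso (semidirect p d1 D1 psi1) (semidirect p d2 D2 psi2).
              f ` complement D1 = complement D2 \<and>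
              (\<forall>g \<in> carrier D1. f (fvec_zero, g) = (fvec_zero, \<sigma> g))))"
proof -
  have p: "0 < p" using assms(1) by (simp add: prime_gt_0_int)
  have coprime: "\<not> p dvd int (order D1)" "\<not> p dvd int (order D2)"
    using assms(8) by (auto intro: dvd_mult dvd_mult2)
  have "\<exists>\<sigma>. \<sigma> \<in> iso D1 D2 \<and> rep_equiv D1 p d1 d2 psi1 (psi2 \<circ> \<sigma>)"
    if "f \<in> iso (semidirect p d1 D1 psi1) (semidirect p d2 D2 psi2)" for f
  proof -
    interpret semidirect_iso p d1 d2 D1 D2 psi1 psi2 f
      using assms coprime that by (simp add: semidirect_iso_def)
    show ?thesis using quot_iso rep_equiv_quot by blast
  qed
  then show ?thesis
    using rep_equiv_imp_semidirect_iso[OF p] by (meson is_isoI is_iso_def ex_in_conv)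
qed

end
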